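(* For every $n\ge1$ there is an injective map from $\bar{Q}_3(0,n)$ to $\bar{P}_3(0,n)$.
   Context: Partitions: $\lambda_1\ge\cdots\ge\lambda_\ell>0$, $\ell(\lambda)=\ell$, $\lambda_i=0$ for $i>\ell$, $s(\lambda)$ the smallest part with $s(\emptyset)=+\infty$. Rank $=\lambda_1-\ell$. Durfee symbol $(\alpha,\beta)_j$ of $\lambda$: $j$ is the largest integer with $\lambda_j\ge j$, $\alpha$ is the conjugate of $(\lambda_1-j,\dots,\lambda_j-j)$, $\beta=(\lambda_{j+1},\lambda_{j+2},\dots)$; $|\lambda|=|\alpha|+|\beta|+j^2$. $\bar{Q}_3(0,n)$ is the set of partitions of $n$ whose Durfee symbol $(\alpha,\beta)_j$ satisfies $j\ge1$, $\beta_1=j$, $\ell(\beta)-\ell(\alpha)\ge1$, $\alpha_1=\alpha_2=j$, $s(\alpha)=1$ and $s(\beta)=2$. $\bar{P}_3(0,n)$ is the set of partitions of $n$ with rank $\ge0$ whose Durfee symbol $(\gamma,\delta)_{j'}$ satisfies $j'\ge1$, $\ell(\gamma)=\ell(\delta)$, $\gamma_1\le j'-2$, $\delta_1=j'$ and $s(\delta)=1$. *)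

theory Defs
  imports Main "HOL-Library.Extended_Nat"
begin

definition is_partition :: "nat list \<Rightarrow> bool" where
  "is_partition xs \<longleftrightarrow> sorted_wrt (\<ge>) xs \<and> 0 \<notin> set xs"

definition partition_of :: "nat \<Rightarrow> nat list \<Rightarrow> bool" where
  "partition_of n xs \<longleftrightarrow> is_partition xs \<and> sum_list xs = n"

text \<open>The i-th part (1-indexed), zero beyond the length.\<close>
definition part :: "nat list \<Rightarrow> nat \<Rightarrow> nat" where
  "part xs i = (if 1 \<le> i \<and> i \<le> length xs then xs ! (i - 1) else 0)"

definition smallest :: "nat list \<Rightarrow> enat" where
  "smallest xs = (if xs = [] then \<infinity> else enat (Min (set xs)))"

definition rank :: "nat list \<Rightarrow> int" where
  "rank xs = int (part xs 1) - int (length xs)"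

text \<open>Conjugate of a weakly decreasing list of naturals (zero entries allowed).\<close>
definition conj :: "nat list \<Rightarrow> nat list" where
  "conj ys = [length (filter (\<lambda>y. i \<le> y) ys). i \<leftarrow> [1..<Suc (foldr max ys 0)]]"

definition durfee :: "nat list \<Rightarrow> nat" where
  "durfee xs = (GREATEST j. j \<le> part xs j)"

definition dalpha :: "nat list \<Rightarrow> nat list" where
  "dalpha xs = conj (map (\<lambda>x. x - durfee xs) (take (durfee xs) xs))"

definition dbeta :: "nat list \<Rightarrow> nat list" where
  "dbeta xs = drop (durfee xs) xs"

definition Q3bar :: "nat \<Rightarrow> nat list set" where
  "Q3bar n = {xs. partition_of n xs \<and>
     (let j = durfee xs; \<alpha> = dalpha xs; \<beta> = dbeta xs in
       j \<ge> 1 \<and> part \<beta> 1 = j \<and> int (length \<beta>) - int (length \<alpha>) \<ge> 1 \<and>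
       part \<alpha> 1 = j \<and> part \<alpha> 2 = j \<and> smallest \<alpha> = 1 \<and> smallest \<beta> = 2)}"

definition P3bar :: "nat \<Rightarrow> nat list set" where
  "P3bar n = {xs. partition_of n xs \<and> rank xs \<ge> 0 \<and>
     (let j' = durfee xs; \<gamma> = dalpha xs; \<delta> = dbeta xs in
       j' \<ge> 1 \<and> length \<gamma> = length \<delta> \<and> int (part \<gamma> 1) \<le> int j' - 2 \<and>
       part \<delta> 1 = j' \<and> smallest \<delta> = 1)}"

end

(*
  A partition in Q3bar has Durfee symbol (j j a 1, j b 2)_j with |b| \<ge> |a| + 2.  Enlarging the
  Durfee square by one and passing to the symbol (b-1 1, j+1 a+1 1...1)_(j+1), padded with ones to
  equal lengths, preserves the size of the partition and yields a symbol of the shape required in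
  P3bar (the equal lengths give rank 0).  Since j, a and b can be read off from the new symbol and a
  partition is determined by its Durfee symbol, the map is injective.  The latter fact, and the
  reconstruction of a partition from a symbol, rest on the duality between a weakly decreasing list
  and its conjugate: at least i parts are \<ge> v iff the i-th part is \<ge> v.
*)

theory Submission
  imports Defs
begin

definition count_ge :: "nat list \<Rightarrow> nat \<Rightarrow> nat" where
  "count_ge ys v = length (filter (\<lambda>y. v \<le> y) ys)"

lemma count_ge_Nil [simp]: "count_ge [] v = 0"
  by (simp add: count_ge_def)

lemma count_ge_Cons: "count_ge (y # ys) v = (if v \<le> y then 1 else 0) + count_ge ys v"
  by (simp add: count_ge_def)

lemma count_ge_0 [simp]: "count_ge ys 0 = length ys"
  by (simp add: count_ge_def)

lemma count_ge_eq_0: "\<forall>y\<in>set ys. y < v \<Longrightarrow> count_ge ys v = 0"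
  by (simp add: count_ge_def filter_empty_conv not_le)

lemma count_ge_eq_length: "\<forall>y\<in>set ys. v \<le> y \<Longrightarrow> count_ge ys v = length ys"
  by (simp add: count_ge_def)

lemma count_ge_antimono: "v \<le> w \<Longrightarrow> count_ge ys w \<le> count_ge ys v"
  by (induct ys) (auto simp: count_ge_Cons)

lemma sorted_map_count_ge_upt: "sorted_wrt (\<ge>) (map (count_ge ys) [a..<b])"
  unfolding sorted_wrt_map by (rule sorted_wrt_mono_rel[OF _ sorted_wrt_upt]) (simp add: count_ge_antimono)

lemma sum_count_ge: "\<forall>y\<in>set ys. y \<le> K \<Longrightarrow> (\<Sum>v=1..K. count_ge ys v) = sum_list ys"
proof (induct ys)
  case (Cons y ys)
  have "{1..K} \<inter> {v. v \<le> y} = {1..y}"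
    using Cons.prems by auto
  then have "(\<Sum>v=1..K. if v \<le> y then 1 else 0) = card {1..y}"
    by (simp add: sum.If_cases)
  then show ?case
    using Cons by (simp add: count_ge_Cons sum.distrib)
qed simp

lemma part_Cons_Suc: "1 \<le> i \<Longrightarrow> part (y # ys) (Suc i) = part ys i"
  by (simp add: part_def)

lemma count_ge_ge_iff:
  assumes "sorted_wrt (\<ge>) ys" "1 \<le> i" "1 \<le> v"
  shows "i \<le> count_ge ys v \<longleftrightarrow> v \<le> part ys i"
  using assms
proof (induct ys arbitrary: i)
  case Nil
  then show ?case by (simp add: part_def)
next
  case (Cons y ys)
  show ?case
  proof (cases "v \<le> y")
    case True
    show ?thesis
    proof (cases "i = 1")
      case False
      then obtain i' where "i = Suc i'" "1 \<le> i'"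
        using Cons.prems(2) by (cases i) auto
      then show ?thesis
        using Cons True by (simp add: count_ge_Cons part_Cons_Suc)
    qed (use True in \<open>simp add: count_ge_Cons part_def\<close>)
  next
    case False
    then have "count_ge (y # ys) v = 0"
      using Cons.prems(1) by (intro count_ge_eq_0) auto
    moreover have "part (y # ys) i \<le> y"
      using Cons.prems by (auto simp: part_def nth_Cons' dest: nth_mem)
    ultimately show ?thesis
      using False Cons.prems(2) by auto
  qed
qed

lemma sorted_eq_if_count_ge_eq:
  assumes "sorted_wrt (\<ge>) xs" "sorted_wrt (\<ge>) ys" "\<And>v. count_ge xs v = count_ge ys v"
  shows "xs = ys"
proof (rule nth_equalityI)
  show len: "length xs = length ys"
    using assms(3)[of 0] by simp
  fix i assume "i < length xs"
  have "v \<le> part xs (Suc i) \<longleftrightarrow> v \<le> part ys (Suc i)" if "1 \<le> v" for v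
    using count_ge_ge_iff[OF assms(1) _ that, of "Suc i"] count_ge_ge_iff[OF assms(2) _ that, of "Suc i"]
      assms(3) by simp
  then have "part xs (Suc i) = part ys (Suc i)"
    by (metis One_nat_def Suc_leI le_antisym le_refl not_gr_zero zero_le)
  with \<open>i < length xs\<close> len show "xs ! i = ys ! i"
    by (simp add: part_def)
qed

lemma le_foldr_max: "y \<in> set ys \<Longrightarrow> y \<le> foldr max ys (0::nat)"
  by (induct ys) (auto simp: le_max_iff_disj)

lemma foldr_max_le: "\<forall>y\<in>set ys. y \<le> c \<Longrightarrow> foldr max ys 0 \<le> (c::nat)"
  by (induct ys) auto

lemma foldr_max_sorted: "sorted_wrt (\<ge>) (y # ys) \<Longrightarrow> foldr max (y # ys) 0 = (y::nat)"
  using foldr_max_le[of ys y] by (simp add: max_def)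

lemma conj_eq_map_count_ge: "conj ys = map (count_ge ys) [1..<Suc (foldr max ys 0)]"
  by (simp add: conj_def count_ge_def)

lemma length_conj: "length (conj ys) = foldr max ys 0"
  by (simp add: conj_eq_map_count_ge)

lemma part_conj:
  assumes "1 \<le> v"
  shows "part (conj ys) v = count_ge ys v"
proof (cases "v \<le> foldr max ys 0")
  case False
  then have "count_ge ys v = 0"
    using le_foldr_max[of _ ys] by (intro count_ge_eq_0) force
  with False show ?thesis
    by (simp add: part_def length_conj)
qed (use assms in \<open>simp add: part_def conj_eq_map_count_ge del: upt_Suc\<close>)

lemma sorted_conj: "sorted_wrt (\<ge>) (conj ys)"
  unfolding conj_eq_map_count_ge by (rule sorted_map_count_ge_upt)

lemma sum_list_conj: "sum_list (conj ys) = sum_list ys"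
proof -
  have "sum_list (conj ys) = (\<Sum>v=1..foldr max ys 0. count_ge ys v)"
    by (simp add: conj_eq_map_count_ge sum_list_distinct_conv_sum_set atLeastLessThanSuc_atLeastAtMost
        del: upt_Suc)
  also have "\<dots> = sum_list ys"
    by (rule sum_count_ge) (auto intro: le_foldr_max)
  finally show ?thesis .
qed

lemma count_ge_conj:
  assumes "sorted_wrt (\<ge>) ys" "1 \<le> v"
  shows "count_ge (conj ys) v = part ys v"
proof -
  let ?M = "foldr max ys 0"
  have "count_ge (conj ys) v = length (filter (\<lambda>u. v \<le> count_ge ys u) [1..<Suc ?M])"
    unfolding conj_eq_map_count_ge by (simp add: count_ge_def[of "map _ _"] filter_map comp_def del: upt_Suc)
  also have "\<dots> = card {u \<in> {1..?M}. v \<le> count_ge ys u}"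
    using distinct_card[of "filter (\<lambda>u. v \<le> count_ge ys u) [1..<Suc ?M]"]
    by (simp add: atLeastLessThanSuc_atLeastAtMost del: upt_Suc)
  also have "{u \<in> {1..?M}. v \<le> count_ge ys u} = {1..part ys v}"
    using count_ge_ge_iff[OF assms(1,2)] le_foldr_max[of "part ys v" ys]
    by (auto simp: part_def split: if_splits)
  finally show ?thesis
    by simp
qed

lemma part_antimono:
  assumes "sorted_wrt (\<ge>) xs" "1 \<le> i" "i \<le> k"
  shows "part xs k \<le> part xs i"
  using assms by (cases "i = k") (auto simp: part_def sorted_wrt_iff_nth_less)

lemma durfee_eqI:
  assumes "sorted_wrt (\<ge>) xs" "j \<le> part xs j" "part xs (Suc j) < Suc j"
  shows "durfee xs = j"
  unfolding durfee_def
proof (rule Greatest_equality)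
  fix i assume i: "i \<le> part xs i"
  show "i \<le> j"
  proof (rule ccontr)
    assume "\<not> i \<le> j"
    then have "part xs i \<le> part xs (Suc j)"
      using part_antimono[OF assms(1), of "Suc j" i] by simp
    with i assms(3) \<open>\<not> i \<le> j\<close> show False
      by simp
  qed
qed (fact assms(2))

lemma durfee_le_part: "durfee xs \<le> part xs (durfee xs)"
  unfolding durfee_def
  by (rule GreatestI_nat[of _ 0 "length xs"]) (auto simp: part_def split: if_splits)

lemma durfee_le_length: "durfee xs \<le> length xs"
  using durfee_le_part[of xs] by (auto simp: part_def split: if_splits)

lemma durfee_le_take_durfee:
  assumes "sorted_wrt (\<ge>) xs" "x \<in> set (take (durfee xs) xs)"
  shows "durfee xs \<le> x"
proof -
  obtain i where i: "i < durfee xs" "x = xs ! i"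
    using assms(2) durfee_le_length[of xs] by (auto simp: in_set_conv_nth)
  have "durfee xs \<le> xs ! (durfee xs - 1)"
    using durfee_le_part[of xs] i by (simp add: part_def split: if_splits)
  also have "\<dots> \<le> xs ! i"
    using assms(1) i durfee_le_length[of xs]
    by (cases "i = durfee xs - 1") (auto simp: sorted_wrt_iff_nth_less)
  finally show ?thesis
    using i by simp
qed

definition durfee_arm :: "nat list \<Rightarrow> nat list" where
  "durfee_arm xs = map (\<lambda>x. x - durfee xs) (take (durfee xs) xs)"

lemma length_durfee_arm [simp]: "length (durfee_arm xs) = durfee xs"
  using durfee_le_length[of xs] by (simp add: durfee_arm_def)

lemma dalpha_eq_conj_durfee_arm: "dalpha xs = conj (durfee_arm xs)"
  by (simp add: dalpha_def durfee_arm_def)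

lemma take_durfee_eq:
  "sorted_wrt (\<ge>) xs \<Longrightarrow> take (durfee xs) xs = map (\<lambda>r. r + durfee xs) (durfee_arm xs)"
  using durfee_le_take_durfee[of xs] by (auto simp: durfee_arm_def intro!: map_idI[symmetric])

lemma sum_list_durfee_symbol:
  assumes "sorted_wrt (\<ge>) xs"
  shows "sum_list xs = durfee xs * durfee xs + sum_list (dalpha xs) + sum_list (dbeta xs)"
proof -
  have "sum_list xs = sum_list (take (durfee xs) xs) + sum_list (dbeta xs)"
    by (metis append_take_drop_id dbeta_def sum_list_append)
  also have "sum_list (take (durfee xs) xs) = sum_list (durfee_arm xs) + durfee xs * durfee xs"
    by (subst take_durfee_eq[OF assms]) (simp add: sum_list_addf sum_list_triv)
  finally show ?thesis
    by (simp add: dalpha_eq_conj_durfee_arm sum_list_conj)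
qed

lemma partition_eq_if_durfee_symbol_eq:
  assumes "sorted_wrt (\<ge>) xs" "sorted_wrt (\<ge>) ys" "durfee xs = durfee ys"
    "dalpha xs = dalpha ys" "dbeta xs = dbeta ys"
  shows "xs = ys"
proof -
  have sorted_arm: "sorted_wrt (\<ge>) (durfee_arm zs)" if "sorted_wrt (\<ge>) zs" for zs
    unfolding durfee_arm_def sorted_wrt_map
    by (rule sorted_wrt_mono_rel[OF _ sorted_wrt_take[OF that]]) auto
  have "count_ge (durfee_arm xs) v = count_ge (durfee_arm ys) v" for v
  proof (cases "v = 0")
    case True
    then show ?thesis
      using assms(3) by simp
  next
    case False
    then show ?thesis
      using assms(4) part_conj[of v "durfee_arm xs"] part_conj[of v "durfee_arm ys"]
      by (simp add: dalpha_eq_conj_durfee_arm)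
  qed
  then have "durfee_arm xs = durfee_arm ys"
    using sorted_eq_if_count_ge_eq sorted_arm assms(1,2) by blast
  then have "take (durfee xs) xs = take (durfee ys) ys"
    using take_durfee_eq assms(1-3) by metis
  with assms(3,5) show ?thesis
    by (metis append_take_drop_id dbeta_def)
qed

text \<open>Inverse of the Durfee symbol: the first \<open>k\<close> rows are the square plus the conjugate of \<open>\<gamma>\<close>.\<close>
definition of_durfee_symbol :: "nat \<Rightarrow> nat list \<Rightarrow> nat list \<Rightarrow> nat list" where
  "of_durfee_symbol k \<gamma> \<delta> = map (\<lambda>i. k + count_ge \<gamma> i) [1..<Suc k] @ \<delta>"

lemma sorted_of_durfee_symbol:
  assumes "sorted_wrt (\<ge>) \<delta>" "\<forall>x\<in>set \<delta>. x \<le> k"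
  shows "sorted_wrt (\<ge>) (of_durfee_symbol k \<gamma> \<delta>)"
proof -
  have "sorted_wrt (\<ge>) (map (\<lambda>i. k + count_ge \<gamma> i) [1..<Suc k])"
    using sorted_map_count_ge_upt[of \<gamma> 1 "Suc k"] by (simp add: sorted_wrt_map del: upt_Suc)
  with assms show ?thesis
    unfolding of_durfee_symbol_def sorted_wrt_append by fastforce
qed

lemma conj_map_count_ge_upt:
  assumes "1 \<le> k" "sorted_wrt (\<ge>) \<gamma>" "\<forall>x\<in>set \<gamma>. 1 \<le> x \<and> x \<le> k"
  shows "conj (map (count_ge \<gamma>) [1..<Suc k]) = \<gamma>"
proof -
  define C where "C = map (count_ge \<gamma>) [1..<Suc k]"
  have sorted_C: "sorted_wrt (\<ge>) C"
    unfolding C_def by (rule sorted_map_count_ge_upt)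
  have "count_ge (conj C) v = count_ge \<gamma> v" for v
  proof (cases "v = 0")
    case True
    have "C = count_ge \<gamma> 1 # map (count_ge \<gamma>) [Suc 1..<Suc k]"
      using assms(1) by (simp add: C_def upt_conv_Cons del: upt_Suc)
    then have "foldr max C 0 = count_ge \<gamma> 1"
      using sorted_C foldr_max_sorted by metis
    with True assms(3) show ?thesis
      by (simp add: length_conj count_ge_eq_length)
  next
    case False
    then have "count_ge (conj C) v = part C v"
      using count_ge_conj[OF sorted_C] by simp
    also have "\<dots> = count_ge \<gamma> v"
      using False assms(3) count_ge_eq_0[of \<gamma> v]
      by (auto simp: C_def part_def simp del: upt_Suc) force
    finally show ?thesis .
  qed
  then show ?thesis
    unfolding C_def[symmetric] using sorted_eq_if_count_ge_eq[OF sorted_conj assms(2)] by blast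
qed

lemma durfee_symbol_of_durfee_symbol:
  assumes "1 \<le> k" "sorted_wrt (\<ge>) \<gamma>" "\<forall>x\<in>set \<gamma>. 1 \<le> x \<and> x \<le> k"
    "sorted_wrt (\<ge>) \<delta>" "\<forall>x\<in>set \<delta>. x \<le> k"
  defines "xs \<equiv> of_durfee_symbol k \<gamma> \<delta>"
  shows "durfee xs = k" "dalpha xs = \<gamma>" "dbeta xs = \<delta>"
proof -
  have sorted_xs: "sorted_wrt (\<ge>) xs"
    unfolding xs_def using assms(4,5) by (rule sorted_of_durfee_symbol)
  have "k \<le> part xs k"
    using assms(1) by (simp add: xs_def of_durfee_symbol_def part_def nth_append del: upt_Suc)
  have "part xs (Suc k) = part \<delta> 1"
    by (simp add: xs_def of_durfee_symbol_def part_def nth_append del: upt_Suc)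
  also have "\<dots> < Suc k"
    using assms(5) by (cases \<delta>) (auto simp: part_def)
  finally show durfee: "durfee xs = k"
    using durfee_eqI[OF sorted_xs \<open>k \<le> part xs k\<close>] by blast
  then show "dbeta xs = \<delta>"
    by (simp add: xs_def dbeta_def of_durfee_symbol_def del: upt_Suc)
  have "durfee_arm xs = map (count_ge \<gamma>) [1..<Suc k]"
    unfolding durfee_arm_def durfee by (simp add: xs_def of_durfee_symbol_def del: upt_Suc)
  then show "dalpha xs = \<gamma>"
    using conj_map_count_ge_upt[OF assms(1-3)] by (simp add: dalpha_eq_conj_durfee_arm)
qed

lemma of_durfee_symbol_in_P3bar:
  assumes "3 \<le> k" "sorted_wrt (\<ge>) \<gamma>" "\<forall>x\<in>set \<gamma>. 1 \<le> x \<and> x \<le> k - 2"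
    "sorted_wrt (\<ge>) \<delta>" "\<forall>x\<in>set \<delta>. 1 \<le> x \<and> x \<le> k" "part \<delta> 1 = k" "1 \<in> set \<delta>"
    "length \<gamma> = length \<delta>"
  shows "of_durfee_symbol k \<gamma> \<delta> \<in> P3bar (k * k + sum_list \<gamma> + sum_list \<delta>)"
proof -
  define xs where "xs = of_durfee_symbol k \<gamma> \<delta>"
  have "\<forall>x\<in>set \<gamma>. 1 \<le> x \<and> x \<le> k"
    using assms(3) by auto
  then have symbol: "durfee xs = k" "dalpha xs = \<gamma>" "dbeta xs = \<delta>"
    using durfee_symbol_of_durfee_symbol[of k \<gamma> \<delta>] assms(1,2,4,5) unfolding xs_def by auto
  have sorted_xs: "sorted_wrt (\<ge>) xs"
    unfolding xs_def using assms(4,5) by (auto intro: sorted_of_durfee_symbol)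
  have "0 \<notin> set xs"
    using assms(1,5) by (auto simp: xs_def of_durfee_symbol_def)
  then have partition: "partition_of (k * k + sum_list \<gamma> + sum_list \<delta>) xs"
    using sorted_xs sum_list_durfee_symbol[OF sorted_xs] symbol
    by (simp add: partition_of_def is_partition_def)
  have "part xs 1 = k + length \<gamma>"
    using assms(1,3) by (simp add: xs_def of_durfee_symbol_def part_def nth_append count_ge_eq_length
        del: upt_Suc)
  then have "rank xs = 0"
    using assms(8) by (simp add: rank_def xs_def of_durfee_symbol_def)
  moreover have "part \<gamma> 1 \<le> k - 2"
    using assms(3) by (cases \<gamma>) (auto simp: part_def)
  moreover have "smallest \<delta> = 1"
    using assms(5,7) by (auto simp: smallest_def one_enat_def intro!: Min_eqI)
  ultimately show ?thesis
    using partition symbol assms(1,6,8) unfolding xs_def[symmetric]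
    by (auto simp: P3bar_def Let_def)
qed

lemma sorted_snoc_smallest:
  assumes "sorted_wrt (\<ge>) xs" "smallest xs = enat m"
  obtains ys where "xs = ys @ [m]" "\<forall>y\<in>set ys. m \<le> y"
proof -
  have "xs \<noteq> []" "Min (set xs) = m"
    using assms(2) by (auto simp: smallest_def split: if_splits)
  then obtain ys z where xs: "xs = ys @ [z]"
    by (cases xs rule: rev_exhaust) auto
  with assms(1) have "\<forall>y\<in>set xs. z \<le> y"
    by (auto simp: sorted_wrt_append)
  with xs \<open>Min (set xs) = m\<close> have "z = m"
    by (metis List.finite_set Min_eqI in_set_conv_decomp)
  with xs assms(1) show ?thesis
    by (intro that) (auto simp: sorted_wrt_append)
qed

definition Q3bar_parameters :: "nat \<Rightarrow> nat list \<Rightarrow> nat list \<Rightarrow> bool" where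
  "Q3bar_parameters j a b \<longleftrightarrow> 2 \<le> j \<and> sorted_wrt (\<ge>) a \<and> (\<forall>x\<in>set a. 1 \<le> x \<and> x \<le> j) \<and>
     sorted_wrt (\<ge>) b \<and> (\<forall>x\<in>set b. 2 \<le> x \<and> x \<le> j) \<and> length a + 2 \<le> length b"

lemma Q3bar_durfee_symbol:
  assumes "xs \<in> Q3bar n"
  obtains a b where "dalpha xs = durfee xs # durfee xs # a @ [1]" "dbeta xs = durfee xs # b @ [2]"
    "Q3bar_parameters (durfee xs) a b"
proof -
  define j where "j = durfee xs"
  have "sorted_wrt (\<ge>) xs" and beta1: "part (dbeta xs) 1 = j"
    and len: "length (dalpha xs) < length (dbeta xs)"
    and alpha12: "part (dalpha xs) 1 = j" "part (dalpha xs) 2 = j"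
    and "smallest (dalpha xs) = enat 1" "smallest (dbeta xs) = enat 2"
    using assms by (auto simp: Q3bar_def partition_of_def is_partition_def Let_def j_def
        one_enat_def numeral_eq_enat)
  moreover have "sorted_wrt (\<ge>) (dalpha xs)"
    by (simp add: dalpha_def sorted_conj)
  moreover have sorted_beta: "sorted_wrt (\<ge>) (dbeta xs)"
    using \<open>sorted_wrt (\<ge>) xs\<close> by (simp add: dbeta_def sorted_wrt_drop)
  ultimately obtain \<alpha>' \<beta>' where
    alpha: "dalpha xs = \<alpha>' @ [1]" "\<forall>y\<in>set \<alpha>'. 1 \<le> y" "sorted_wrt (\<ge>) (\<alpha>' @ [1])" and
    beta: "dbeta xs = \<beta>' @ [2]" "\<forall>y\<in>set \<beta>'. 2 \<le> y" "sorted_wrt (\<ge>) (\<beta>' @ [2])"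
    by (metis sorted_snoc_smallest)
  obtain b where b: "\<beta>' = j # b"
    using beta1 len beta(1) alpha(1) by (cases \<beta>') (auto simp: part_def)
  then have j: "2 \<le> j"
    using beta(2) by simp
  obtain a where a: "\<alpha>' = j # j # a"
    using alpha12 alpha(1) j by (cases \<alpha>'; cases "tl \<alpha>'") (auto simp: part_def)
  show ?thesis
  proof (rule that[folded j_def])
    show "dalpha xs = j # j # a @ [1]" "dbeta xs = j # b @ [2]"
      using alpha(1) beta(1) a b by simp_all
    show "Q3bar_parameters j a b"
      using alpha(2,3) beta(2,3) a b j len alpha(1) beta(1)
      by (auto simp: Q3bar_parameters_def sorted_wrt_append)
  qed
qed

text \<open>The ones appended to \<open>\<delta>\<close> make its length equal to that of \<open>\<gamma>\<close>.\<close>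
definition P3bar_gamma :: "nat list \<Rightarrow> nat list" where
  "P3bar_gamma b = map (\<lambda>x. x - 1) b @ [1]"

definition P3bar_delta :: "nat \<Rightarrow> nat list \<Rightarrow> nat list \<Rightarrow> nat list" where
  "P3bar_delta j a b = Suc j # map Suc a @ replicate (length b - length a) 1"

definition Q3bar_to_P3bar :: "nat list \<Rightarrow> nat list" where
  "Q3bar_to_P3bar xs =
    (let j = durfee xs; a = butlast (drop 2 (dalpha xs)); b = butlast (tl (dbeta xs))
     in of_durfee_symbol (Suc j) (P3bar_gamma b) (P3bar_delta j a b))"

lemma Q3bar_to_P3bar_eq:
  assumes "dalpha xs = durfee xs # durfee xs # a @ [1]" "dbeta xs = durfee xs # b @ [2]"
  shows "Q3bar_to_P3bar xs = of_durfee_symbol (Suc (durfee xs)) (P3bar_gamma b) (P3bar_delta (durfee xs) a b)"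
  using assms by (simp add: Q3bar_to_P3bar_def Let_def)

lemma P3bar_symbol_conditions:
  assumes "Q3bar_parameters j a b"
  shows "sorted_wrt (\<ge>) (P3bar_gamma b)" "\<forall>x\<in>set (P3bar_gamma b). 1 \<le> x \<and> x \<le> j - 1"
    "sorted_wrt (\<ge>) (P3bar_delta j a b)" "\<forall>x\<in>set (P3bar_delta j a b). 1 \<le> x \<and> x \<le> Suc j"
    "part (P3bar_delta j a b) 1 = Suc j" "1 \<in> set (P3bar_delta j a b)"
    "length (P3bar_gamma b) = length (P3bar_delta j a b)"
proof -
  have sorted_ones: "sorted_wrt (\<ge>) (replicate k (1::nat))" for k
    by (induct k) auto
  show "sorted_wrt (\<ge>) (P3bar_gamma b)" "sorted_wrt (\<ge>) (P3bar_delta j a b)"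
    using assms sorted_ones by (auto simp: Q3bar_parameters_def P3bar_gamma_def P3bar_delta_def
        sorted_wrt_append sorted_wrt_map intro: sorted_wrt_mono_rel[of _ "(\<ge>)"])
qed (use assms in \<open>auto simp: Q3bar_parameters_def P3bar_gamma_def P3bar_delta_def part_def\<close>)

lemma Q3bar_to_P3bar_in_P3bar:
  assumes "xs \<in> Q3bar n"
  shows "Q3bar_to_P3bar xs \<in> P3bar n"
proof -
  obtain a b where ab: "dalpha xs = durfee xs # durfee xs # a @ [1]" "dbeta xs = durfee xs # b @ [2]"
    and parameters: "Q3bar_parameters (durfee xs) a b"
    using Q3bar_durfee_symbol[OF assms] by blast
  define j where "j = durfee xs"
  have "\<forall>x\<in>set b. 1 \<le> x"
    using parameters by (auto simp: Q3bar_parameters_def)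
  then have "sum_list (map (\<lambda>x. x - 1) b) + length b = sum_list b"
    by (induct b) auto
  moreover have "sum_list (map Suc a) = sum_list a + length a"
    by (induct a) auto
  moreover have "sorted_wrt (\<ge>) xs" "sum_list xs = n"
    using assms by (auto simp: Q3bar_def partition_of_def is_partition_def)
  ultimately have n: "n = Suc j * Suc j + sum_list (P3bar_gamma b) + sum_list (P3bar_delta j a b)"
    using sum_list_durfee_symbol[of xs] ab parameters
    by (simp add: j_def P3bar_gamma_def P3bar_delta_def Q3bar_parameters_def sum_list_replicate)
  show ?thesis
    unfolding Q3bar_to_P3bar_eq[OF ab] j_def[symmetric] n
    using parameters P3bar_symbol_conditions[OF parameters]
    by (intro of_durfee_symbol_in_P3bar) (auto simp: j_def Q3bar_parameters_def)
qed

lemma durfee_symbol_Q3bar_to_P3bar: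
  assumes "xs \<in> Q3bar n"
  defines "ys \<equiv> Q3bar_to_P3bar xs"
  shows "durfee xs = durfee ys - 1"
    "dalpha xs = durfee xs # durfee xs # map (\<lambda>x. x - 1) (takeWhile (\<lambda>x. x \<noteq> 1) (tl (dbeta ys))) @ [1]"
    "dbeta xs = durfee xs # map Suc (butlast (dalpha ys)) @ [2]"
proof -
  obtain a b where ab: "dalpha xs = durfee xs # durfee xs # a @ [1]" "dbeta xs = durfee xs # b @ [2]"
    and parameters: "Q3bar_parameters (durfee xs) a b"
    using Q3bar_durfee_symbol[OF assms(1)] by blast
  note conditions = P3bar_symbol_conditions[OF parameters]
  have symbol: "durfee ys = Suc (durfee xs)" "dalpha ys = P3bar_gamma b" "dbeta ys = P3bar_delta (durfee xs) a b"
    unfolding ys_def Q3bar_to_P3bar_eq[OF ab]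
    using conditions by (auto intro!: durfee_symbol_of_durfee_symbol)
  then show "durfee xs = durfee ys - 1"
    by simp
  have "\<forall>x\<in>set (map Suc a). x \<noteq> 1"
    using parameters by (auto simp: Q3bar_parameters_def)
  then have "takeWhile (\<lambda>x. x \<noteq> 1) (tl (dbeta ys)) = map Suc a"
    unfolding symbol P3bar_delta_def list.sel(3) by (subst takeWhile_append2) auto
  with ab(1) show "dalpha xs = durfee xs # durfee xs # map (\<lambda>x. x - 1) (takeWhile (\<lambda>x. x \<noteq> 1) (tl (dbeta ys))) @ [1]"
    by (simp add: comp_def)
  have "map Suc (butlast (dalpha ys)) = b"
    using parameters by (auto simp: symbol P3bar_gamma_def Q3bar_parameters_def intro!: map_idI)
  with ab(2) show "dbeta xs = durfee xs # map Suc (butlast (dalpha ys)) @ [2]"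
    by simp
qed

lemma inj_on_Q3bar_to_P3bar: "inj_on Q3bar_to_P3bar (Q3bar n)"
proof (rule inj_onI)
  fix xs ys assume "xs \<in> Q3bar n" "ys \<in> Q3bar n" and image: "Q3bar_to_P3bar xs = Q3bar_to_P3bar ys"
  note symbol_xs = durfee_symbol_Q3bar_to_P3bar[OF \<open>xs \<in> Q3bar n\<close>]
  note symbol_ys = durfee_symbol_Q3bar_to_P3bar[OF \<open>ys \<in> Q3bar n\<close>]
  have "sorted_wrt (\<ge>) xs" "sorted_wrt (\<ge>) ys"
    using \<open>xs \<in> Q3bar n\<close> \<open>ys \<in> Q3bar n\<close> by (auto simp: Q3bar_def partition_of_def is_partition_def)
  moreover have durfee: "durfee xs = durfee ys"
    by (simp only: symbol_xs(1) symbol_ys(1) image)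
  moreover have "dalpha xs = dalpha ys" "dbeta xs = dbeta ys"
    by (simp_all only: symbol_xs(2,3) symbol_ys(2,3) image durfee)
  ultimately show "xs = ys"
    by (rule partition_eq_if_durfee_symbol_eq)
qed

theorem lemma5p3:
  fixes n :: nat
  assumes "n \<ge> 1"
  shows "\<exists>f. inj_on f (Q3bar n) \<and> f ` Q3bar n \<subseteq> P3bar n"
  using inj_on_Q3bar_to_P3bar Q3bar_to_P3bar_in_P3bar by blast

end
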